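(* Let $f(x,y)=\left(x+\frac1y,\ y-\frac1y-x\right)$ be the Hénon–Devaney map, with inverse $f^{-1}(u,v)=\left(u-\frac{1}{u+v},\ u+v\right)$, and write $f^{-k}(t,0)=(f^{-k}_x(t,0),f^{-k}_y(t,0))$ whenever defined. For $n\ge1$ let $S_n$ be the set of $t\in\mathbb{R}$ for which $f^{-n}(t,0)$ is defined and $f^{-j}_y(t,0)>-f^{-j}_x(t,0)$ for all $0\le j\le n-1$, and let $t_n\in S_n$ be a parameter with $f^{-n}_x(t_n,0)=0$. Then the sequence $\left(f^{-n}_y(t_n,0)\right)_{n\in\mathbb{N}}$ diverges.
   Context: Here $f^{0}(t,0)=(t,0)$, so the condition for $j=0$ reads $t>0$; e.g. $t_1=1$. *)

theory Defs
  imports Complex_Main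
begin

definition hd_map :: "real \<times> real \<Rightarrow> (real \<times> real) option" where
  "hd_map p = (if snd p = 0 then None
               else Some (fst p + 1 / snd p, snd p - 1 / snd p - fst p))"

definition hd_inv :: "real \<times> real \<Rightarrow> (real \<times> real) option" where
  "hd_inv p = (if fst p + snd p = 0 then None
               else Some (fst p - 1 / (fst p + snd p), fst p + snd p))"

fun hd_inv_iter :: "nat \<Rightarrow> real \<times> real \<Rightarrow> (real \<times> real) option" where
  "hd_inv_iter 0 p = Some p"
| "hd_inv_iter (Suc k) p = Option.bind (hd_inv_iter k p) hd_inv"

definition S_set :: "nat \<Rightarrow> real set" where
  "S_set n = {t. hd_inv_iter n (t, 0) \<noteq> None \<and>
      (\<forall>j<n. \<exists>p. hd_inv_iter j (t, 0) = Some p \<and> snd p > - fst p)}"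

end

theory Submission
  imports Defs
begin

text \<open>Write \<open>(x\<^sub>k, y\<^sub>k) = f\<^sup>-\<^sup>k(t, 0)\<close>. As long as \<open>x\<^sub>k + y\<^sub>k > 0\<close>, one inverse step
  adds \<open>x\<^sub>k\<close> to \<open>y\<close> and decreases \<open>x\<close>, so \<open>y\<^sub>k - k x\<^sub>k\<close> never decreases and \<open>y\<^sub>k \<ge> k x\<^sub>k\<close>.
  If \<open>x\<^sub>n = 0\<close> then \<open>x\<^sub>n\<^sub>-\<^sub>1 = 1/y\<^sub>n\<close>, hence \<open>y\<^sub>n = x\<^sub>n\<^sub>-\<^sub>1 + y\<^sub>n\<^sub>-\<^sub>1 \<ge> n x\<^sub>n\<^sub>-\<^sub>1 = n/y\<^sub>n\<close>, i.e.
  \<open>y\<^sub>n\<^sup>2 \<ge> n\<close>: the sequence is unbounded.\<close>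

lemma hd_inv_iter_Suc_SomeD:
  assumes "hd_inv_iter (Suc m) q = Some p"
  obtains x y where "hd_inv_iter m q = Some (x, y)" "x + y \<noteq> 0"
    "p = (x - 1 / (x + y), x + y)"
proof -
  obtain r where "hd_inv_iter m q = Some r" "hd_inv r = Some p"
    using assms by (cases "hd_inv_iter m q") auto
  then show thesis
    using that by (cases r) (auto simp: hd_inv_def split: if_splits)
qed

lemma hd_inv_iter_snd_minus_fst_mono:
  assumes "hd_inv_iter m q = Some (x, y)"
    and "\<forall>j<m. \<exists>p. hd_inv_iter j q = Some p \<and> snd p > - fst p"
  shows "snd q \<le> y - real m * x"
  using assms
proof (induction m arbitrary: x y)
  case 0
  then show ?case by simp
next
  case (Suc m)
  obtain a b where prev: "hd_inv_iter m q = Some (a, b)"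
    and step: "x = a - 1 / (a + b)" "y = a + b"
    using Suc.prems(1) by (rule hd_inv_iter_Suc_SomeD) auto
  have "snd q \<le> b - real m * a"
    using Suc.IH[OF prev] Suc.prems(2) by simp
  moreover have "a + b > 0"
    using Suc.prems(2) prev by fastforce
  then have "x \<le> a"
    using step(1) by simp
  then have "real (Suc m) * x \<le> real (Suc m) * a"
    by (intro mult_left_mono) auto
  ultimately show ?case
    using step(2) by (simp add: algebra_simps)
qed

lemma S_set_fst_zero_imp_snd_sq_ge:
  assumes "t \<in> S_set n" "n \<ge> 1"
    and "hd_inv_iter n (t, 0) = Some p" "fst p = 0"
  shows "real n \<le> (snd p)\<^sup>2"
proof -
  obtain m where n: "n = Suc m"
    using assms(2) by (cases n) auto
  have conds: "\<forall>j<Suc m. \<exists>p. hd_inv_iter j (t, 0) = Some p \<and> snd p > - fst p"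
    using assms(1) by (simp add: S_set_def n)
  obtain a b where prev: "hd_inv_iter m (t, 0) = Some (a, b)"
    and p: "p = (a - 1 / (a + b), a + b)"
    using assms(3) unfolding n by (rule hd_inv_iter_Suc_SomeD)
  have pos: "a + b > 0"
    using conds prev by fastforce
  have "a * (a + b) = 1"
    using assms(4) pos by (simp add: p field_simps)
  have "real m * a \<le> b"
    using hd_inv_iter_snd_minus_fst_mono[OF prev] conds by simp
  then have "real (Suc m) * a \<le> a + b"
    by (simp add: algebra_simps)
  then have "real (Suc m) * a * (a + b) \<le> (a + b) * (a + b)"
    using pos by (intro mult_right_mono) auto
  then show ?thesis
    using \<open>a * (a + b) = 1\<close> by (simp add: n p power2_eq_square mult.assoc)
qed

lemma not_Bseq_if_sq_ge_index:
  fixes a :: "nat \<Rightarrow> real"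
  assumes "\<forall>n\<ge>1. real n \<le> (a n)\<^sup>2"
  shows "\<not> Bseq a"
proof
  assume "Bseq a"
  then obtain B where B: "\<And>n. \<bar>a n\<bar> \<le> B"
    by (auto simp: Bseq_def)
  define n where "n = Suc (nat \<lceil>B\<^sup>2\<rceil>)"
  have "(a n)\<^sup>2 \<le> B\<^sup>2"
    using B[of n] abs_le_square_iff[of "a n" B] by linarith
  moreover have "B\<^sup>2 < real n"
    unfolding n_def by linarith
  moreover have "real n \<le> (a n)\<^sup>2"
    using assms by (simp add: n_def del: of_nat_Suc)
  ultimately show False
    by linarith
qed

theorem mainTheorem4:
  fixes t :: "nat \<Rightarrow> real"
  assumes "\<forall>n\<ge>1. t n \<in> S_set n \<and>
             (\<exists>p. hd_inv_iter n (t n, 0) = Some p \<and> fst p = 0)"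
  shows "\<not> convergent (\<lambda>n. snd (the (hd_inv_iter n (t n, 0))))"
proof -
  have "\<forall>n\<ge>1. real n \<le> (snd (the (hd_inv_iter n (t n, 0))))\<^sup>2"
    using assms S_set_fst_zero_imp_snd_sq_ge by force
  then have "\<not> Bseq (\<lambda>n. snd (the (hd_inv_iter n (t n, 0))))"
    by (rule not_Bseq_if_sq_ge_index)
  then show ?thesis
    using convergent_imp_Bseq by blast
qed

end
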